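(* Let $\mathbb{F}\in\{\mathbb{R},\mathbb{C}\}$, $M>N\ge 1$, and let $\mathcal{P}(M,N)$ be the set of Parseval frames for $\mathbb{F}^N$ with $M$ vectors. If $\Psi\in\mathcal{P}(M,N)$ maximizes $TC$ over $\mathcal{P}(M,N)$, then $$\max\{N,M-N\}\leq TC(\Psi)\leq\sqrt{N(M-N)(M-1)}.$$
   Context: A Parseval frame for $\mathbb{F}^N$ is a family $\{\varphi_i\}_{i=1}^M\subseteq\mathbb{F}^N$ whose $N\times M$ matrix $\Phi$ (columns $\varphi_i$) satisfies $\Phi\Phi^*=I$. The total coherence is $TC(\Phi)=\sum_{i\neq j}|\langle\varphi_i,\varphi_j\rangle|$. *)

theory Defs
  imports Complex_Main
begin

(* A family of M vectors in F^N is encoded as its N x M synthesis matrix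
   Phi :: nat => nat => complex, with entry Phi r j (row r < N, column j < M);
   the j-th frame vector is phi_j = (Phi 0 j, ..., Phi (N-1) j).
   The scalar field F in {R, C} is encoded as a subset Fld of complex:
   Fld = \<real> (real frames) or Fld = UNIV (complex frames).
   Entries outside the index ranges are irrelevant. *)

definition frame_inner :: "nat \<Rightarrow> (nat \<Rightarrow> nat \<Rightarrow> complex) \<Rightarrow> nat \<Rightarrow> nat \<Rightarrow> complex" where
  "frame_inner N Phi i j = (\<Sum>r<N. Phi r i * cnj (Phi r j))"

definition parseval_frames :: "complex set \<Rightarrow> nat \<Rightarrow> nat \<Rightarrow> (nat \<Rightarrow> nat \<Rightarrow> complex) set" where
  "parseval_frames Fld M N =
     {Phi. (\<forall>r<N. \<forall>j<M. Phi r j \<in> Fld) \<and>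
           (\<forall>r<N. \<forall>s<N. (\<Sum>j<M. Phi r j * cnj (Phi s j)) = (if r = s then 1 else 0))}"

definition total_coherence :: "nat \<Rightarrow> nat \<Rightarrow> (nat \<Rightarrow> nat \<Rightarrow> complex) \<Rightarrow> real" where
  "total_coherence M N Phi =
     (\<Sum>i<M. \<Sum>j\<in>{..<M} - {i}. cmod (frame_inner N Phi i j))"

end

theory Submission
  imports Defs "HOL-Analysis.Analysis"
begin

text \<open>
  Lower bound: a maximiser beats any explicit Parseval frame. If K frame vectors have pairwise
  inner products of modulus 1/K, they contribute K(K-1)/K = K-1 to the total coherence. Two real
  frames realise this: the N+1 columns of the last N rows of the Householder reflection exchanging
  e_0 with the normalised all-ones vector of length N+1 (padded by zero vectors) give K = N+1,
  and M-N+1 copies of e_0/sqrt(M-N+1) followed by e_1, ..., e_(N-1) give K = M-N+1.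

  Upper bound: the Gram matrix G of a Parseval frame is an orthogonal projection of rank N, so
  sum_j |G_ij|^2 = G_ii and the squared Frobenius norm of G equals its trace N. By Cauchy-Schwarz
  on the diagonal, sum_i G_ii^2 >= N^2/M, so the off-diagonal entries have squared sum at most
  N(M-N)/M; Cauchy-Schwarz over the M(M-1) off-diagonal positions then bounds their sum of moduli.
\<close>

lemma parseval_frame_rows_orthonormal:
  assumes "Psi \<in> parseval_frames Fld M N" "r < N" "s < N"
  shows "(\<Sum>j<M. Psi r j * cnj (Psi s j)) = (if r = s then 1 else 0)"
  using assms unfolding parseval_frames_def by auto

lemma parseval_frames_of_real:
  assumes "Fld = \<real> \<or> Fld = UNIV"
    and "\<And>r s. r < N \<Longrightarrow> s < N \<Longrightarrow> (\<Sum>j<M. A r j * A s j) = (if r = s then 1 else 0)"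
  shows "(\<lambda>r j. complex_of_real (A r j)) \<in> parseval_frames Fld M N"
proof -
  have "(\<Sum>j<M. complex_of_real (A r j) * cnj (complex_of_real (A s j))) = (if r = s then 1 else 0)"
    if "r < N" "s < N" for r s
  proof -
    have "(\<Sum>j<M. complex_of_real (A r j) * cnj (complex_of_real (A s j)))
        = complex_of_real (\<Sum>j<M. A r j * A s j)"
      by simp
    then show ?thesis
      using assms(2)[OF that] by simp
  qed
  then show ?thesis
    using assms(1) unfolding parseval_frames_def by auto
qed

lemma frame_inner_of_real:
  "frame_inner N (\<lambda>r j. complex_of_real (A r j)) i j = complex_of_real (\<Sum>r<N. A r i * A r j)"
  by (simp add: frame_inner_def)

lemma frame_inner_self: "frame_inner N Psi i i = complex_of_real (\<Sum>r<N. (cmod (Psi r i))^2)"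
  unfolding frame_inner_def of_real_sum complex_norm_square ..

lemma total_coherence_ge_equiangular_subset:
  assumes "S \<subseteq> {..<M}"
    and "\<And>i j. i \<in> S \<Longrightarrow> j \<in> S \<Longrightarrow> i \<noteq> j \<Longrightarrow> cmod (frame_inner N Phi i j) = c"
  shows "real (card S) * (real (card S) - 1) * c \<le> total_coherence M N Phi"
proof -
  have "finite S" using assms(1) finite_subset by blast
  have "real (card S) * (real (card S) - 1) * c = (\<Sum>i\<in>S. (real (card S) - 1) * c)"
    by simp
  also have "\<dots> = (\<Sum>i\<in>S. \<Sum>j\<in>S - {i}. c)"
  proof (intro sum.cong refl)
    fix i assume "i \<in> S"
    then have "1 \<le> card S"
      using \<open>finite S\<close> card_0_eq by fastforce
    then show "(real (card S) - 1) * c = (\<Sum>j\<in>S - {i}. c)"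
      using \<open>i \<in> S\<close> \<open>finite S\<close> by (simp add: of_nat_diff)
  qed
  also have "\<dots> = (\<Sum>i\<in>S. \<Sum>j\<in>S - {i}. cmod (frame_inner N Phi i j))"
    using assms(2) by (intro sum.cong) auto
  also have "\<dots> \<le> (\<Sum>i\<in>S. \<Sum>j\<in>{..<M} - {i}. cmod (frame_inner N Phi i j))"
    using assms(1) by (intro sum_mono sum_mono2) auto
  also have "\<dots> \<le> total_coherence M N Phi"
    unfolding total_coherence_def using assms(1) by (intro sum_mono2) (auto intro: sum_nonneg)
  finally show ?thesis .
qed

definition householder :: "(nat \<Rightarrow> real) \<Rightarrow> real \<Rightarrow> nat \<Rightarrow> nat \<Rightarrow> real" where
  "householder v c i j = (if i = j then 1 else 0) - v i * v j / c"

lemma householder_sym: "householder v c i j = householder v c j i"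
  unfolding householder_def by (simp add: mult.commute)

lemma householder_mult_self:
  assumes "c \<noteq> 0" and "(\<Sum>k<K. (v k)^2) = 2 * c" and "i < K" "j < K"
  shows "(\<Sum>k<K. householder v c i k * householder v c k j) = (if i = j then 1 else 0)"
proof -
  have "householder v c i k * householder v c k j
      = (if k = i then (if i = j then 1 else 0) else 0) - (if k = i then v i * v j / c else 0)
        - (if k = j then v i * v j / c else 0) + v i * v j / c^2 * (v k)^2" for k
    using \<open>c \<noteq> 0\<close> by (auto simp: householder_def power2_eq_square field_simps)
  moreover have "(\<Sum>k<K. v i * v j / c^2 * (v k)^2) = v i * v j / c^2 * (2 * c)"
    by (simp only: sum_distrib_left[symmetric] assms(2))
  moreover have "v i * v j / c^2 * (2 * c) = 2 * (v i * v j / c)"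
    using \<open>c \<noteq> 0\<close> by (simp add: power2_eq_square)
  ultimately show ?thesis
    using assms(3,4) by (simp add: sum.distrib sum_subtractf)
qed

definition ones_reflector :: "nat \<Rightarrow> nat \<Rightarrow> nat \<Rightarrow> real" where
  "ones_reflector K = householder (\<lambda>k. (if k = 0 then 1 else 0) - 1 / sqrt K) (1 - 1 / sqrt K)"

lemma ones_reflector_sym: "ones_reflector K i j = ones_reflector K j i"
  unfolding ones_reflector_def by (rule householder_sym)

lemma ones_reflector_first_row:
  assumes "2 \<le> K"
  shows "ones_reflector K 0 j = 1 / sqrt K"
proof -
  have "1 < sqrt K" using assms by simp
  then show ?thesis
    unfolding ones_reflector_def householder_def by (auto simp: field_simps)
qed

lemma ones_reflector_orthogonal:
  assumes "2 \<le> K" and "i < K" "j < K"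
  shows "(\<Sum>k<K. ones_reflector K i k * ones_reflector K k j) = (if i = j then 1 else 0)"
proof -
  define u where "u = 1 / sqrt K"
  have "u \<noteq> 1" and u_sq: "real K * u^2 = 1"
    using assms(1) by (auto simp: u_def power_divide)
  obtain K' where K': "K = Suc K'" using assms(1) by (cases K) auto
  have "(\<Sum>k<K. ((if k = 0 then 1 else 0) - u)^2) = (1 - u)^2 + real K' * u^2"
    unfolding K' sum.lessThan_Suc_shift by simp
  also have "\<dots> = 2 * (1 - u)"
    using u_sq unfolding K' by (simp add: power2_eq_square algebra_simps)
  finally show ?thesis
    using householder_mult_self \<open>u \<noteq> 1\<close> assms(2,3) unfolding ones_reflector_def u_def by simp
qed

definition simplex_frame :: "nat \<Rightarrow> nat \<Rightarrow> nat \<Rightarrow> real" where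
  "simplex_frame N r j = (if j \<le> N then ones_reflector (Suc N) (Suc r) j else 0)"

lemma simplex_frame_rows_orthonormal:
  assumes "N < M" "r < N" "s < N"
  shows "(\<Sum>j<M. simplex_frame N r j * simplex_frame N s j) = (if r = s then 1 else 0)"
proof -
  have "(\<Sum>j<M. simplex_frame N r j * simplex_frame N s j)
      = (\<Sum>j<Suc N. ones_reflector (Suc N) (Suc r) j * ones_reflector (Suc N) j (Suc s))"
    using assms by (intro sum.mono_neutral_cong_right)
      (auto simp: simplex_frame_def ones_reflector_sym)
  also have "\<dots> = (if r = s then 1 else 0)"
    using ones_reflector_orthogonal[of "Suc N" "Suc r" "Suc s"] assms by simp
  finally show ?thesis .
qed

lemma simplex_frame_columns_inner:
  assumes "i \<le> N" "j \<le> N" "i \<noteq> j"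
  shows "(\<Sum>r<N. simplex_frame N r i * simplex_frame N r j) = - 1 / real (Suc N)"
proof -
  have "2 \<le> Suc N" using assms by arith
  have "(\<Sum>r<N. simplex_frame N r i * simplex_frame N r j)
      = (\<Sum>r<Suc N. ones_reflector (Suc N) i r * ones_reflector (Suc N) r j)
        - ones_reflector (Suc N) 0 i * ones_reflector (Suc N) 0 j"
    using assms unfolding sum.lessThan_Suc_shift by (simp add: simplex_frame_def ones_reflector_sym)
  also have "\<dots> = - ((1 / sqrt (Suc N))^2)"
    using assms ones_reflector_orthogonal[OF \<open>2 \<le> Suc N\<close>, of i j]
      ones_reflector_first_row[OF \<open>2 \<le> Suc N\<close>]
    by (simp add: power2_eq_square)
  also have "\<dots> = - 1 / real (Suc N)"
    by (simp add: power_divide del: of_nat_Suc)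
  finally show ?thesis .
qed

lemma simplex_frame_total_coherence:
  assumes "N < M"
  shows "real N \<le> total_coherence M N (\<lambda>r j. complex_of_real (simplex_frame N r j))"
proof -
  have "{..N} \<subseteq> {..<M}" using assms by auto
  moreover have "cmod (frame_inner N (\<lambda>r j. complex_of_real (simplex_frame N r j)) i j)
      = 1 / real (Suc N)" if "i \<in> {..N}" "j \<in> {..N}" "i \<noteq> j" for i j
    using that
    by (simp add: frame_inner_of_real simplex_frame_columns_inner norm_divide del: of_nat_Suc)
  ultimately have "real (card {..N}) * (real (card {..N}) - 1) * (1 / real (Suc N))
      \<le> total_coherence M N (\<lambda>r j. complex_of_real (simplex_frame N r j))"
    by (rule total_coherence_ge_equiangular_subset)
  then show ?thesis by simp
qed

definition repeated_vector_frame :: "nat \<Rightarrow> nat \<Rightarrow> nat \<Rightarrow> nat \<Rightarrow> real" where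
  "repeated_vector_frame M N r j =
     (if r = 0 then (if j \<le> M - N then 1 / sqrt (Suc (M - N)) else 0)
      else if j = r + (M - N) then 1 else 0)"

lemma repeated_vector_frame_rows_orthonormal:
  assumes "N < M" "r < N" "s < N"
  shows "(\<Sum>j<M. repeated_vector_frame M N r j * repeated_vector_frame M N s j)
       = (if r = s then 1 else 0)"
proof -
  have later_row: "(\<Sum>j<M. repeated_vector_frame M N r j * repeated_vector_frame M N s j)
      = (if r = s then 1 else 0)" if "0 < r" "r < N" "s < N" for r s
  proof -
    have "r + (M - N) < M" using that assms(1) by linarith
    have "(\<Sum>j<M. repeated_vector_frame M N r j * repeated_vector_frame M N s j)
        = (\<Sum>j<M. if j = r + (M - N) then repeated_vector_frame M N s j else 0)"
      using that by (intro sum.cong) (auto simp: repeated_vector_frame_def)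
    also have "\<dots> = repeated_vector_frame M N s (r + (M - N))"
      using \<open>r + (M - N) < M\<close> by (simp only: sum.delta[OF finite_lessThan] lessThan_iff if_True)
    also have "\<dots> = (if r = s then 1 else 0)"
      using that by (auto simp: repeated_vector_frame_def)
    finally show ?thesis .
  qed
  have first_row: "(\<Sum>j<M. repeated_vector_frame M N 0 j * repeated_vector_frame M N 0 j) = 1"
  proof -
    have "(\<Sum>j<M. repeated_vector_frame M N 0 j * repeated_vector_frame M N 0 j)
        = (\<Sum>j<Suc (M - N). (1 / sqrt (Suc (M - N)))^2)"
      using assms by (intro sum.mono_neutral_cong_right)
        (auto simp: repeated_vector_frame_def power2_eq_square)
    also have "\<dots> = 1"
      by (simp add: power_divide del: of_nat_Suc)
    finally show ?thesis .
  qed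
  show ?thesis
    using first_row later_row[of r s] later_row[of s r] assms(2,3)
    by (cases "r = 0"; cases "s = 0") (auto simp: mult.commute)
qed

lemma repeated_vector_frame_columns_inner:
  assumes "1 \<le> N" "i \<le> M - N" "j \<le> M - N"
  shows "(\<Sum>r<N. repeated_vector_frame M N r i * repeated_vector_frame M N r j) = 1 / real (Suc (M - N))"
proof -
  obtain N' where N': "N = Suc N'" using assms(1) by (cases N) auto
  have "(\<Sum>r<N. repeated_vector_frame M N r i * repeated_vector_frame M N r j)
      = (1 / sqrt (Suc (M - N)))^2"
    using assms unfolding N' sum.lessThan_Suc_shift
    by (simp add: repeated_vector_frame_def power2_eq_square)
  then show ?thesis
    by (simp add: power_divide del: of_nat_Suc)
qed

lemma repeated_vector_frame_total_coherence:
  assumes "1 \<le> N" "N < M"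
  shows "real (M - N) \<le> total_coherence M N (\<lambda>r j. complex_of_real (repeated_vector_frame M N r j))"
proof -
  have "{..M - N} \<subseteq> {..<M}" using assms by auto
  moreover have "cmod (frame_inner N (\<lambda>r j. complex_of_real (repeated_vector_frame M N r j)) i j)
      = 1 / real (Suc (M - N))" if "i \<in> {..M - N}" "j \<in> {..M - N}" "i \<noteq> j" for i j
    using that assms(1)
    by (simp add: frame_inner_of_real repeated_vector_frame_columns_inner norm_divide del: of_nat_Suc)
  ultimately have "real (card {..M - N}) * (real (card {..M - N}) - 1) * (1 / real (Suc (M - N)))
      \<le> total_coherence M N (\<lambda>r j. complex_of_real (repeated_vector_frame M N r j))"
    by (rule total_coherence_ge_equiangular_subset)
  then show ?thesis by simp
qed

lemma parseval_frame_gram_row_norm: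
  assumes "Psi \<in> parseval_frames Fld M N"
  shows "(\<Sum>j<M. (cmod (frame_inner N Psi i j))^2) = (\<Sum>r<N. (cmod (Psi r i))^2)"
proof -
  have "(\<Sum>j<M. frame_inner N Psi i j * cnj (frame_inner N Psi i j))
      = (\<Sum>j<M. \<Sum>r<N. \<Sum>s<N. Psi r i * cnj (Psi s i) * (Psi s j * cnj (Psi r j)))"
    unfolding frame_inner_def cnj_sum sum_product by (simp add: mult_ac)
  also have "\<dots> = (\<Sum>r<N. \<Sum>s<N. Psi r i * cnj (Psi s i) * (\<Sum>j<M. Psi s j * cnj (Psi r j)))"
    unfolding sum_distrib_left by (subst sum.swap) (simp only: sum.swap[of _ "{..<M}"])
  also have "\<dots> = (\<Sum>r<N. \<Sum>s<N. if s = r then Psi r i * cnj (Psi s i) else 0)"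
    by (intro sum.cong refl) (simp add: parseval_frame_rows_orthonormal[OF assms])
  also have "\<dots> = (\<Sum>r<N. Psi r i * cnj (Psi r i))"
    by simp
  finally have "complex_of_real (\<Sum>j<M. (cmod (frame_inner N Psi i j))^2)
      = complex_of_real (\<Sum>r<N. (cmod (Psi r i))^2)"
    unfolding of_real_sum complex_norm_square .
  then show ?thesis
    by (simp only: of_real_eq_iff)
qed

lemma parseval_frame_trace:
  assumes "Psi \<in> parseval_frames Fld M N"
  shows "(\<Sum>i<M. \<Sum>r<N. (cmod (Psi r i))^2) = real N"
proof -
  have "complex_of_real (\<Sum>i<M. \<Sum>r<N. (cmod (Psi r i))^2) = (\<Sum>r<N. \<Sum>i<M. Psi r i * cnj (Psi r i))"
    unfolding of_real_sum complex_norm_square by (rule sum.swap)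
  also have "\<dots> = complex_of_real (real N)"
    by (simp add: parseval_frame_rows_orthonormal[OF assms])
  finally show ?thesis
    by (simp only: of_real_eq_iff)
qed

lemma parseval_frame_off_diagonal_gram:
  assumes "Psi \<in> parseval_frames Fld M N"
  shows "real M * (\<Sum>i<M. \<Sum>j\<in>{..<M} - {i}. (cmod (frame_inner N Psi i j))^2)
       \<le> real N * (real M - real N)"
proof -
  define d where "d i = (\<Sum>r<N. (cmod (Psi r i))^2)" for i
  have "(\<Sum>j\<in>{..<M} - {i}. (cmod (frame_inner N Psi i j))^2) = d i - (d i)^2" if "i < M" for i
  proof -
    have "d i \<ge> 0" unfolding d_def by (intro sum_nonneg) simp
    then have "(cmod (frame_inner N Psi i i))^2 = (d i)^2"
      unfolding frame_inner_self d_def[symmetric] norm_of_real by simp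
    moreover have "(\<Sum>j<M. (cmod (frame_inner N Psi i j))^2)
        = (cmod (frame_inner N Psi i i))^2 + (\<Sum>j\<in>{..<M} - {i}. (cmod (frame_inner N Psi i j))^2)"
      using that by (intro sum.remove) auto
    ultimately show ?thesis
      using parseval_frame_gram_row_norm[OF assms, of i] unfolding d_def by linarith
  qed
  then have off_diagonal: "(\<Sum>i<M. \<Sum>j\<in>{..<M} - {i}. (cmod (frame_inner N Psi i j))^2)
      = real N - (\<Sum>i<M. (d i)^2)"
    using parseval_frame_trace[OF assms] by (simp add: sum_subtractf d_def)
  have "(real N)^2 \<le> (\<Sum>i<M. (d i)^2) * real M"
    using sum_squared_le_sum_of_squares[of d "{..<M}"] parseval_frame_trace[OF assms]
    by (simp add: d_def)
  then show ?thesis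
    unfolding off_diagonal right_diff_distrib by (simp add: power2_eq_square mult.commute)
qed

lemma total_coherence_squared_le:
  "(total_coherence M N Phi)^2
     \<le> real M * real (M - 1) * (\<Sum>i<M. \<Sum>j\<in>{..<M} - {i}. (cmod (frame_inner N Phi i j))^2)"
proof -
  define S where "S = Sigma {..<M} (\<lambda>i. {..<M} - {i})"
  have "card S = M * (M - 1)"
    unfolding S_def by (simp add: card_Diff_singleton)
  moreover have "total_coherence M N Phi = (\<Sum>(i, j)\<in>S. cmod (frame_inner N Phi i j))"
    unfolding total_coherence_def S_def by (simp add: sum.Sigma)
  moreover have "(\<Sum>i<M. \<Sum>j\<in>{..<M} - {i}. (cmod (frame_inner N Phi i j))^2)
      = (\<Sum>(i, j)\<in>S. (cmod (frame_inner N Phi i j))^2)"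
    unfolding S_def by (simp add: sum.Sigma)
  ultimately show ?thesis
    using sum_squared_le_sum_of_squares[of "\<lambda>(i, j). cmod (frame_inner N Phi i j)" S]
    by (simp add: case_prod_beta mult.commute)
qed

lemma parseval_frame_total_coherence_le:
  assumes "Psi \<in> parseval_frames Fld M N" "N \<le> M"
  shows "total_coherence M N Psi \<le> sqrt (real N * real (M - N) * real (M - 1))"
proof (rule real_le_rsqrt)
  have "(total_coherence M N Psi)^2
      \<le> real (M - 1) * (real M * (\<Sum>i<M. \<Sum>j\<in>{..<M} - {i}. (cmod (frame_inner N Psi i j))^2))"
    using total_coherence_squared_le[of M N Psi] by (simp add: mult_ac)
  also have "\<dots> \<le> real (M - 1) * (real N * (real M - real N))"
    using parseval_frame_off_diagonal_gram[OF assms(1)] by (intro mult_left_mono) auto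
  finally show "(total_coherence M N Psi)^2 \<le> real N * real (M - N) * real (M - 1)"
    using assms(2) by (simp add: of_nat_diff mult_ac)
qed

theorem proposition3:
  fixes Fld :: "complex set" and M N :: nat and Psi :: "nat \<Rightarrow> nat \<Rightarrow> complex"
  assumes "Fld = \<real> \<or> Fld = UNIV"
    and "1 \<le> N" and "N < M"
    and "Psi \<in> parseval_frames Fld M N"
    and "\<forall>Phi \<in> parseval_frames Fld M N. total_coherence M N Phi \<le> total_coherence M N Psi"
  shows "real (max N (M - N)) \<le> total_coherence M N Psi
       \<and> total_coherence M N Psi \<le> sqrt (real N * real (M - N) * real (M - 1))"
proof
  have "(\<lambda>r j. complex_of_real (simplex_frame N r j)) \<in> parseval_frames Fld M N"
    using assms(1,3) by (intro parseval_frames_of_real simplex_frame_rows_orthonormal) auto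
  then have "real N \<le> total_coherence M N Psi"
    using simplex_frame_total_coherence[OF assms(3)] assms(5) by force
  moreover have "(\<lambda>r j. complex_of_real (repeated_vector_frame M N r j)) \<in> parseval_frames Fld M N"
    using assms(1,3) by (intro parseval_frames_of_real repeated_vector_frame_rows_orthonormal) auto
  then have "real (M - N) \<le> total_coherence M N Psi"
    using repeated_vector_frame_total_coherence[OF assms(2,3)] assms(5) by force
  ultimately show "real (max N (M - N)) \<le> total_coherence M N Psi"
    by (cases "N \<le> M - N") (simp_all add: max_def)
  show "total_coherence M N Psi \<le> sqrt (real N * real (M - N) * real (M - 1))"
    using parseval_frame_total_coherence_le[OF assms(4)] assms(3) by simp
qed

end
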